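(* Let $R_e\approx1.4877$ be the unique positive root of $\frac{10}{7(R+1)}-\frac{R^2\sqrt{R}}{R^2+R+1}=0$. Then for all $0<x,y,z<R_e$, $$2d_0(y,z)+\tfrac{7}{10}\sqrt{y}\,d_1(y,z)-\tfrac{51}{100}\sqrt{yz}\,d_2(y,z)+\tfrac{10}{7}\sqrt{x}\,d_1(x,y)+\sqrt{xy}\,d_2(x,y)>\tfrac{1}{50}.$$
   Context: For $x,y\ge0$: $d_0(x,y)=\frac{1+2x}{1+x}+\frac{xy}{1+y+xy}$, $d_1(x,y)=-\frac{x}{1+x}-\frac{xy}{1+y+xy}-\frac{xy^2}{1+y+xy}\frac{1+x}{1+y}$, $d_2(x,y)=\frac{xy^2}{1+y+xy}\frac{1+x}{1+y}$. *)

theory Defs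
  imports Complex_Main
begin

definition d0 :: "real \<Rightarrow> real \<Rightarrow> real" where
  "d0 x y = (1 + 2*x) / (1 + x) + x*y / (1 + y + x*y)"

definition d1 :: "real \<Rightarrow> real \<Rightarrow> real" where
  "d1 x y = - (x / (1 + x)) - x*y / (1 + y + x*y)
            - (x*y^2 / (1 + y + x*y)) * ((1 + x) / (1 + y))"

definition d2 :: "real \<Rightarrow> real \<Rightarrow> real" where
  "d2 x y = (x*y^2 / (1 + y + x*y)) * ((1 + x) / (1 + y))"

definition Re_root :: real where
  "Re_root = (THE R. R > 0 \<and> 10 / (7 * (R + 1)) - R^2 * sqrt R / (R^2 + R + 1) = 0)"

end

theory Submission
  imports Defs
begin

(* Write b = sqrt y and c = sqrt z. After expanding d0 and d1, the left-hand side is a sum of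
   terms that are monotone in x, b and c, and x enters only through sqrt x times a coefficient
   that is nonpositive and antitone in x. Hence on a box [b0,b1] x [c0,c1] the expression is
   bounded below by a rational number obtained by evaluating every term at the unfavourable
   corner, with x replaced by an upper bound s^2 for R_e. Since R_e < (61/50)^2, it suffices to
   cover [0, 61/50]^2 by 32 boxes, found by repeated bisection, on each of which this corner
   bound exceeds 1/50. *)

lemma the_pos_root_less:
  fixes f :: "real \<Rightarrow> real"
  assumes decr: "\<And>u v. 0 < u \<Longrightarrow> u < v \<Longrightarrow> f v < f u"
    and "0 < a" "a \<le> b" "0 \<le> f a" "f b < 0"
    and cont: "continuous_on {a..b} f"
  shows "(THE r. 0 < r \<and> f r = 0) < b"
proof -
  obtain r where r: "a \<le> r" "r \<le> b" "f r = 0"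
    using IVT2'[of f b 0 a] \<open>f b < 0\<close> \<open>0 \<le> f a\<close> \<open>a \<le> b\<close> cont by auto
  have "0 < r" using \<open>0 < a\<close> r(1) by linarith
  have unique: "R = r" if "0 < R" "f R = 0" for R
  proof (rule ccontr)
    assume "R \<noteq> r"
    then consider "R < r" | "r < R" by linarith
    then show False
      using decr[of R r] decr[of r R] that \<open>0 < r\<close> r(3) by cases auto
  qed
  have "(THE r. 0 < r \<and> f r = 0) = r"
    by (rule the_equality) (use \<open>0 < r\<close> r(3) unique in blast)+
  moreover have "r \<noteq> b" using r(3) \<open>f b < 0\<close> by auto
  ultimately show ?thesis using r(2) by simp
qed

definition Re_fun :: "real \<Rightarrow> real" where
  "Re_fun R = 10 / (7 * (R + 1)) - R^2 * sqrt R / (R^2 + R + 1)"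

lemma Re_fun_strict_antimono:
  assumes "0 < u" "u < v"
  shows "Re_fun v < Re_fun u"
proof -
  have first_term: "10 / (7 * (v + 1)) < 10 / (7 * (u + 1))"
    using assms by (simp add: divide_simps)
  have cross: "u^2 * (v^2 + v + 1) \<le> v^2 * (u^2 + u + 1)"
  proof -
    have "u^2 * v \<le> v^2 * u" using assms by (simp add: power2_eq_square mult_left_mono)
    moreover have "u^2 \<le> v^2" using assms by (simp add: power_mono)
    ultimately show ?thesis by (simp add: algebra_simps)
  qed
  have "sqrt u * (u^2 * (v^2 + v + 1)) \<le> sqrt v * (v^2 * (u^2 + u + 1))"
    by (rule mult_mono[OF _ cross]) (use assms in auto)
  then have second_term: "u^2 * sqrt u / (u^2 + u + 1) \<le> v^2 * sqrt v / (v^2 + v + 1)"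
    using assms by (simp add: divide_simps algebra_simps add_pos_pos)
  show ?thesis using first_term second_term unfolding Re_fun_def by linarith
qed

(* (61/50)^2 = 1.4884, just above R_e = 1.48770... *)
lemma Re_root_less: "Re_root < (61/50)^2"
proof -
  have "Re_root = (THE R. 0 < R \<and> Re_fun R = 0)"
    unfolding Re_root_def Re_fun_def by simp
  also have "\<dots> < (61/50)^2"
  proof (rule the_pos_root_less[of Re_fun 1])
    show "Re_fun ((61/50)^2) < 0"
      unfolding Re_fun_def real_sqrt_abs by (simp add: divide_simps)
    have "R^2 + R + 1 \<noteq> 0" if "1 \<le> R" for R :: real
      using that zero_le_power2[of R] by linarith
    then show "continuous_on {1..(61/50)^2} Re_fun"
      unfolding Re_fun_def by (intro continuous_intros) auto
  qed (simp_all add: Re_fun_strict_antimono, simp add: Re_fun_def)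
  finally show ?thesis .
qed

definition dh :: "real \<Rightarrow> real \<Rightarrow> real" where
  "dh x y = x*y / (1 + y + x*y)"

lemma d0_eq_dh: "d0 x y = (1 + 2*x) / (1 + x) + dh x y"
  unfolding d0_def dh_def by simp

lemma d1_eq_dh: "d1 x y = - (x / (1 + x)) - dh x y - d2 x y"
  unfolding d1_def d2_def dh_def by simp

lemma frac_one_plus_mono:
  fixes s t :: real
  assumes "0 \<le> s" "s \<le> t"
  shows "s / (1 + s) \<le> t / (1 + t)"
  using assms by (simp add: divide_simps algebra_simps)

lemma dh_nonneg: "0 \<le> x \<Longrightarrow> 0 \<le> y \<Longrightarrow> 0 \<le> dh x y"
  unfolding dh_def by simp

lemma dh_mono:
  assumes "0 \<le> x" "x \<le> x'" "0 \<le> y" "y \<le> y'"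
  shows "dh x y \<le> dh x' y'"
proof -
  have "x*y \<le> x'*y'" "x*y*y' \<le> x'*y'*y"
    using assms by (auto intro: mult_mono simp: mult.commute mult.left_commute mult_right_mono)
  then have "x*y * (1 + y' + x'*y') \<le> x'*y' * (1 + y + x*y)"
    by (simp add: algebra_simps)
  moreover have "0 < 1 + y' + x'*y'" "0 < 1 + y + x*y"
    using assms by (simp_all add: add_pos_nonneg)
  ultimately show ?thesis unfolding dh_def by (simp add: divide_simps)
qed

lemma d2_factor:
  assumes "0 \<le> x" "0 \<le> y"
  shows "d2 x y = x * ((1 + x)*y / (1 + (1 + x)*y)) * (y / (1 + y))"
proof -
  have "1 + y + x*y \<noteq> 0" "1 + (1 + x)*y \<noteq> 0" "1 + y \<noteq> 0"
    using assms by (auto simp: algebra_simps add_nonneg_eq_0_iff)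
  then show ?thesis unfolding d2_def by (simp add: field_simps power2_eq_square)
qed

lemma d2_nonneg: "0 \<le> x \<Longrightarrow> 0 \<le> y \<Longrightarrow> 0 \<le> d2 x y"
  by (simp add: d2_factor)

lemma d2_mono:
  assumes "0 \<le> x" "x \<le> x'" "0 \<le> y" "y \<le> y'"
  shows "d2 x y \<le> d2 x' y'"
proof -
  have "0 \<le> x'" "0 \<le> y'" using assms by linarith+
  have "(1 + x)*y \<le> (1 + x')*y'" using assms by (intro mult_mono) auto
  then have "(1 + x)*y / (1 + (1 + x)*y) \<le> (1 + x')*y' / (1 + (1 + x')*y')"
    using assms by (intro frac_one_plus_mono) auto
  moreover have "y / (1 + y) \<le> y' / (1 + y')" using assms by (intro frac_one_plus_mono) auto
  ultimately show ?thesis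
    using assms unfolding d2_factor[OF assms(1,3)] d2_factor[OF \<open>0 \<le> x'\<close> \<open>0 \<le> y'\<close>]
    by (intro mult_mono) (auto simp: add_pos_nonneg)
qed

definition A2_lhs :: "real \<Rightarrow> real \<Rightarrow> real \<Rightarrow> real" where
  "A2_lhs x y z = 2 * d0 y z + 7/10 * sqrt y * d1 y z - 51/100 * sqrt (y*z) * d2 y z
     + 10/7 * sqrt x * d1 x y + sqrt (x*y) * d2 x y"

definition A2_x_coeff :: "real \<Rightarrow> real \<Rightarrow> real \<Rightarrow> real" where
  "A2_x_coeff b x y = - 10/7 * (x / (1 + x)) - 10/7 * dh x y + (b - 10/7) * d2 x y"

lemma A2_lhs_eq:
  "A2_lhs x y z = 2 * ((1 + 2*y) / (1 + y)) + (2 - 7/10 * sqrt y) * dh y z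
     - 7/10 * sqrt y * (y / (1 + y)) - (7/10 + 51/100 * sqrt z) * sqrt y * d2 y z
     + sqrt x * A2_x_coeff (sqrt y) x y"
  unfolding A2_lhs_def A2_x_coeff_def d0_eq_dh d1_eq_dh
  by (simp add: real_sqrt_mult algebra_simps add_divide_distrib)

lemma A2_x_coeff_nonpos:
  assumes "b \<le> 10/7" "0 \<le> x" "0 \<le> y"
  shows "A2_x_coeff b x y \<le> 0"
proof -
  have "(b - 10/7) * d2 x y \<le> 0"
    using assms d2_nonneg[of x y] by (simp add: mult_nonpos_nonneg)
  moreover have "0 \<le> x / (1 + x)" using assms by simp
  ultimately show ?thesis
    unfolding A2_x_coeff_def using dh_nonneg[of x y] assms by linarith
qed

lemma A2_x_coeff_antimono:
  assumes "0 \<le> x" "x \<le> x'" "0 \<le> y" "y \<le> y'" "b \<le> b'" "b' \<le> 10/7"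
  shows "A2_x_coeff b x' y' \<le> A2_x_coeff b' x y"
proof -
  have "x / (1 + x) \<le> x' / (1 + x')" using assms by (intro frac_one_plus_mono)
  moreover have "dh x y \<le> dh x' y'" using assms by (intro dh_mono)
  moreover have "(b - 10/7) * d2 x' y' \<le> (b' - 10/7) * d2 x y"
  proof -
    have "(b - 10/7) * d2 x' y' \<le> (b' - 10/7) * d2 x' y'"
      using assms d2_nonneg[of x' y'] by (intro mult_right_mono) auto
    also have "\<dots> \<le> (b' - 10/7) * d2 x y"
      using assms d2_mono[of x x' y y'] by (intro mult_left_mono_neg) auto
    finally show ?thesis .
  qed
  ultimately show ?thesis unfolding A2_x_coeff_def by linarith
qed

definition A2_box_lower :: "real \<Rightarrow> real \<Rightarrow> real \<Rightarrow> real \<Rightarrow> real \<Rightarrow> real" where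
  "A2_box_lower s b0 b1 c0 c1 = 2 * ((1 + 2*b0^2) / (1 + b0^2)) + (2 - 7/10 * b1) * dh (b0^2) (c0^2)
     - 7/10 * b1 * (b1^2 / (1 + b1^2)) - (7/10 + 51/100 * c1) * b1 * d2 (b1^2) (c1^2)
     + s * A2_x_coeff b0 (s^2) (b1^2)"

lemma A2_box_lower_le:
  assumes "0 \<le> s" "0 < x" "x \<le> s^2" "0 < y" "0 < z"
    and "0 \<le> b0" "b0 \<le> sqrt y" "sqrt y \<le> b1" "b1 \<le> 10/7"
    and "0 \<le> c0" "c0 \<le> sqrt z" "sqrt z \<le> c1"
  shows "A2_box_lower s b0 b1 c0 c1 \<le> A2_lhs x y z"
proof -
  have y: "b0^2 \<le> y" "y \<le> b1^2"
    using assms power_mono[of b0 "sqrt y" 2] power_mono[of "sqrt y" b1 2] by auto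
  have z: "c0^2 \<le> z" "z \<le> c1^2"
    using assms power_mono[of c0 "sqrt z" 2] power_mono[of "sqrt z" c1 2] by auto
  have "sqrt x \<le> s" using assms real_sqrt_le_mono[of x "s^2"] by simp
  have t1: "2 * ((1 + 2*b0^2) / (1 + b0^2)) \<le> 2 * ((1 + 2*y) / (1 + y))"
    using y add_pos_nonneg[of 1 "b0^2"] by (simp add: divide_simps algebra_simps)
  have t2: "(2 - 7/10 * b1) * dh (b0^2) (c0^2) \<le> (2 - 7/10 * sqrt y) * dh y z"
    using assms y z dh_nonneg[of "b0^2" "c0^2"] by (intro mult_mono dh_mono) auto
  have t3: "7/10 * sqrt y * (y / (1 + y)) \<le> 7/10 * b1 * (b1^2 / (1 + b1^2))"
    using assms y frac_one_plus_mono[of y "b1^2"] by (intro mult_mono) auto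
  have t4: "(7/10 + 51/100 * sqrt z) * sqrt y * d2 y z \<le> (7/10 + 51/100 * c1) * b1 * d2 (b1^2) (c1^2)"
    using assms y z d2_nonneg[of y z] by (intro mult_mono d2_mono) auto
  have t5: "s * A2_x_coeff b0 (s^2) (b1^2) \<le> sqrt x * A2_x_coeff (sqrt y) x y"
  proof -
    have "s * A2_x_coeff b0 (s^2) (b1^2) \<le> sqrt x * A2_x_coeff b0 (s^2) (b1^2)"
      using assms \<open>sqrt x \<le> s\<close> A2_x_coeff_nonpos[of b0 "s^2" "b1^2"]
      by (intro mult_right_mono_neg) auto
    also have "\<dots> \<le> sqrt x * A2_x_coeff (sqrt y) x y"
      using assms y by (intro mult_left_mono A2_x_coeff_antimono) auto
    finally show ?thesis .
  qed
  show ?thesis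
    unfolding A2_lhs_eq A2_box_lower_def using t1 t2 t3 t4 t5 by linarith
qed

datatype bisection = Leaf | Split_y bisection bisection | Split_z bisection bisection

fun box_certified :: "real \<Rightarrow> bisection \<Rightarrow> real \<Rightarrow> real \<Rightarrow> real \<Rightarrow> real \<Rightarrow> bool" where
  "box_certified s Leaf b0 b1 c0 c1 \<longleftrightarrow>
     0 \<le> b0 \<and> b1 \<le> 10/7 \<and> 0 \<le> c0 \<and> 1/50 < A2_box_lower s b0 b1 c0 c1"
| "box_certified s (Split_y l r) b0 b1 c0 c1 \<longleftrightarrow>
     box_certified s l b0 ((b0 + b1) / 2) c0 c1 \<and> box_certified s r ((b0 + b1) / 2) b1 c0 c1"
| "box_certified s (Split_z l r) b0 b1 c0 c1 \<longleftrightarrow>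
     box_certified s l b0 b1 c0 ((c0 + c1) / 2) \<and> box_certified s r b0 b1 ((c0 + c1) / 2) c1"

lemma A2_lhs_gt_if_box_certified:
  assumes "box_certified s t b0 b1 c0 c1" "0 \<le> s" "0 < x" "x \<le> s^2" "0 < y" "0 < z"
    and "b0 \<le> sqrt y" "sqrt y \<le> b1" "c0 \<le> sqrt z" "sqrt z \<le> c1"
  shows "1/50 < A2_lhs x y z"
  using assms(1,7-)
proof (induction t arbitrary: b0 b1 c0 c1)
  case Leaf
  then show ?case
    using A2_box_lower_le[of s x y z b0 b1 c0 c1] assms(2-6) by auto
next
  case (Split_y l r)
  then show ?case by (cases "sqrt y \<le> (b0 + b1) / 2") auto
next
  case (Split_z l r)
  then show ?case by (cases "sqrt z \<le> (c0 + c1) / 2") auto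
qed

lemma A2_certificate:
  "box_certified (61/50)
     (Split_y
       (Split_z (Split_y Leaf Leaf) (Split_y Leaf Leaf))
       (Split_z
         (Split_y (Split_z Leaf (Split_y Leaf Leaf)) (Split_z Leaf (Split_y Leaf Leaf)))
         (Split_y
           (Split_z (Split_y Leaf Leaf) (Split_y Leaf Leaf))
           (Split_z
             (Split_y Leaf (Split_z Leaf Leaf))
             (Split_y
               (Split_z Leaf (Split_y Leaf Leaf))
               (Split_z
                 (Split_y Leaf Leaf)
                 (Split_y Leaf
                   (Split_z
                     (Split_y Leaf Leaf)
                     (Split_y Leaf
                       (Split_z
                         (Split_y Leaf Leaf)
                         (Split_y Leaf (Split_z Leaf (Split_y Leaf Leaf)))))))))))))
     0 (61/50) 0 (61/50)"
  by (simp add: A2_box_lower_def A2_x_coeff_def dh_def d2_def power_divide)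

theorem lemmaA2:
  fixes x y z :: real
  assumes "0 < x" "x < Re_root" "0 < y" "y < Re_root" "0 < z" "z < Re_root"
  shows "2 * d0 y z + 7/10 * sqrt y * d1 y z - 51/100 * sqrt (y*z) * d2 y z
         + 10/7 * sqrt x * d1 x y + sqrt (x*y) * d2 x y > 1/50"
proof -
  define s :: real where "s = 61/50"
  have "Re_root < s^2" using Re_root_less unfolding s_def .
  then have "x \<le> s^2" "sqrt y \<le> s" "sqrt z \<le> s"
    using assms real_sqrt_le_mono[of y "s^2"] real_sqrt_le_mono[of z "s^2"]
    by (simp_all add: s_def)
  then have "1/50 < A2_lhs x y z"
    using assms by (intro A2_lhs_gt_if_box_certified[OF A2_certificate[folded s_def]])
      (auto simp: s_def)
  then show ?thesis unfolding A2_lhs_def by simp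
qed

end
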